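(* Assume no treatment anticipation, missingness as an absorbing state, random sampling, the selection model, and monotonicity. Assume also that $\mathbb{E}[S_{it}\mid G_i=g]>0$ for all $t,g$. If positive monotonicity holds ($S_{i2}(1)\ge S_{i2}(0)$ for all $i$), then $\pi_0=1$ and $$\pi_1=\frac{\mathbb{E}[S_{i2}(0)\mid G_i=1]}{\mathbb{E}[S_{i2}\mid G_i=1]}=\frac{\mathbb{E}[S_{i1}\mid G_i=1]}{\mathbb{E}[S_{i2}\mid G_i=1]}\cdot\frac{\mathbb{E}[S_{i2}\mid G_i=0]}{\mathbb{E}[S_{i1}\mid G_i=0]}\in[0,1].$$ If negative monotonicity holds ($S_{i2}(1)\le S_{i2}(0)$ for all $i$), then $\pi_1=1$ and $$\pi_0=\frac{\mathbb{E}[S_{i2}(1)\mid G_i=0]}{\mathbb{E}[S_{i2}\mid G_i=0]}=\frac{\mathbb{E}[S_{i1}\mid G_i=0]}{\mathbb{E}[S_{i2}\mid G_i=0]}\cdot\frac{\mathbb{E}[S_{i2}\mid G_i=1]}{\mathbb{E}[S_{i1}\mid G_i=1]}\in[0,1].$$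
   Context: Units $i$ are observed in periods $t\in\{1,2\}$. $G_i\in\{0,1\}$ indicates that unit $i$ is treated in period 2; nobody is treated in period 1. Period-2 potential selection indicators are $S_{i2}(1),S_{i2}(0)\in\{0,1\}$, where 1 means the outcome is observed. The observed indicator is $S_{i2}=G_iS_{i2}(1)+(1-G_i)S_{i2}(0)$. No anticipation: $S_{i1}$ does not depend on the period-2 treatment, so $S_{i1}(1)=S_{i1}(0)=S_{i1}$. Missingness is absorbing: $S_{i1}=0\Rightarrow S_{i2}=0$. Random sampling: $\{S_{i1},S_{i2},G_i\}$ are i.i.d. across units. Definitions: - $\pi_1=\Pr(S_{i2}(0)=1\mid G_i=1,S_{i2}(1)=1)$. - $\pi_0=\Pr(S_{i2}(1)=1\mid G_i=0,S_{i2}(0)=1)$. Selection model: $S_{it}(0)=h^0(U_{it},t)$ and $S_{it}(1)=h^1(U_{it},t)$, where: - $U_{it}$ is an unobserved scalar; - $h^w(u,t)$ is non-decreasing in $u$ for all $t\in\{1,2\}$ and $w\in\{0,1\}$; - $U$ is continuously distributed, with the same compact support in both groups; - the distribution of $U_{i1}$ given $G_i$ equals that of $U_{i2}$ given $G_i$; - $U_{it}$ is independent of $G_i$ given $S_{it}$, for each $t$. Monotonicity means that either positive monotonicity ($S_{i2}(1)\ge S_{i2}(0)$ for all $i$) or negative monotonicity ($S_{i2}(1)\le S_{i2}(0)$ for all $i$) holds. *)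

theory Defs
  imports "HOL-Probability.Probability"
begin

definition cond_support :: "'a measure \<Rightarrow> ('a \<Rightarrow> real) \<Rightarrow> ('a \<Rightarrow> bool) \<Rightarrow> real set" where
  "cond_support M X Q = {x. \<forall>e>0. cond_prob M (\<lambda>\<omega>. dist (X \<omega>) x < e) Q > 0}"

end

theory Submission
  imports Defs
begin

text \<open>The selection model reads \<open>S\<^sub>1 = [U\<^sub>1 \<in> A]\<close> and \<open>S\<^sub>2(0) = [U\<^sub>2 \<in> B]\<close> for up-sets \<open>A\<close>, \<open>B\<close> of
  the reals, which are therefore nested.  If \<open>B \<subseteq> A\<close>, conditional independence of \<open>U\<^sub>1\<close> and
  \<open>G\<close> given \<open>S\<^sub>1\<close> makes \<open>P(U\<^sub>1 \<in> B | G = g)\<close> a fixed multiple of \<open>P(U\<^sub>1 \<in> A | G = g)\<close>.  If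
  \<open>A \<subseteq> B\<close>, absorbing missingness in the control group leaves no mass of \<open>U\<^sub>1\<close> on the interval
  \<open>B - A\<close> there; as both groups share the support of the atomless \<open>U\<^sub>1\<close>, the treated group
  puts no mass on it either.  By stationarity, in both cases \<open>E[S\<^sub>2(0) | G = g] = r E[S\<^sub>1 | G = g]\<close>
  for both groups, and \<open>r\<close> is read off the control group, where \<open>S\<^sub>2(0)\<close> is observed.\<close>

lemma mono_pred_linear:
  fixes p q :: "'a::linorder \<Rightarrow> bool"
  assumes "mono p" "mono q"
  shows "(\<forall>u. p u \<longrightarrow> q u) \<or> (\<forall>u. q u \<longrightarrow> p u)"
  using assms unfolding mono_def le_bool_def by (metis linear)

lemma is_interval_Collect_mono_diff:
  fixes p q :: "real \<Rightarrow> bool"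
  assumes "mono p" "mono q"
  shows "is_interval {u. q u \<and> \<not> p u}"
  using assms unfolding is_interval_1 mono_def le_bool_def by blast

lemma pred_borel_mono:
  fixes p :: "real \<Rightarrow> bool"
  assumes "mono p"
  shows "Measurable.pred borel p"
proof -
  have "is_interval {u. p u}"
    using assms unfolding is_interval_1 mono_def le_bool_def by blast
  then show ?thesis
    using real_interval_borel_measurable by (simp add: pred_def)
qed

lemma is_interval_diff_interior_subset:
  fixes D :: "real set"
  assumes "is_interval D"
  shows "D - interior D \<subseteq> {Inf D, Sup D}"
proof
  fix x assume x: "x \<in> D - interior D"
  show "x \<in> {Inf D, Sup D}"
  proof (rule ccontr)
    assume "x \<notin> {Inf D, Sup D}"
    then have "Inf D \<noteq> x" "Sup D \<noteq> x"
      by auto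
    then obtain y z where "y \<in> D" "y < x" "z \<in> D" "x < z"
      using cInf_eq_minimum[of x D] cSup_eq_maximum[of x D] x by (meson DiffD1 not_le)
    then have "{y<..<z} \<subseteq> D"
      using assms unfolding is_interval_1 by (meson greaterThanLessThan_iff less_imp_le subsetI)
    then have "{y<..<z} \<subseteq> interior D"
      by (simp add: interior_maximal)
    then show False
      using x \<open>y < x\<close> \<open>x < z\<close> by auto
  qed
qed

context prob_space begin

lemma cond_prob_nonneg: "cond_prob M P Q \<ge> 0"
  by (simp add: cond_prob_def)

lemma cond_prob_le_1: "cond_prob M P Q \<le> 1"
proof (cases "{\<omega>\<in>space M. Q \<omega>} \<in> events")
  case True
  then have "prob {\<omega>\<in>space M. P \<omega> \<and> Q \<omega>} \<le> prob {\<omega>\<in>space M. Q \<omega>}"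
    by (intro finite_measure_mono) auto
  then show ?thesis
    using measure_nonneg[of M "{\<omega>\<in>space M. Q \<omega>}"]
    by (cases "prob {\<omega>\<in>space M. Q \<omega>} = 0") (auto simp: cond_prob_def divide_le_eq_1 less_le)
qed (simp add: cond_prob_def measure_notin_sets)

lemma cond_prob_eq_1:
  assumes "prob {\<omega>\<in>space M. Q \<omega>} \<noteq> 0" and "\<And>\<omega>. Q \<omega> \<Longrightarrow> P \<omega>"
  shows "cond_prob M P Q = 1"
proof -
  have "{\<omega>\<in>space M. P \<omega> \<and> Q \<omega>} = {\<omega>\<in>space M. Q \<omega>}"
    using assms(2) by auto
  then show ?thesis
    using assms(1) by (simp add: cond_prob_def)
qed

lemma cond_prob_conj_cond:
  assumes "prob {\<omega>\<in>space M. B \<omega>} \<noteq> 0"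
  shows "cond_prob M A (\<lambda>\<omega>. B \<omega> \<and> C \<omega>) = cond_prob M (\<lambda>\<omega>. A \<omega> \<and> C \<omega>) B / cond_prob M C B"
  using assms by (simp add: cond_prob_def conj_commute conj_left_commute)

lemma cond_prob_mono:
  assumes "Measurable.pred M (\<lambda>\<omega>. P' \<omega> \<and> Q \<omega>)" and "\<And>\<omega>. Q \<omega> \<Longrightarrow> P \<omega> \<Longrightarrow> P' \<omega>"
  shows "cond_prob M P Q \<le> cond_prob M P' Q"
proof -
  have "prob {\<omega>\<in>space M. P \<omega> \<and> Q \<omega>} \<le> prob {\<omega>\<in>space M. P' \<omega> \<and> Q \<omega>}"
    using assms by (intro finite_measure_mono) auto
  then show ?thesis
    by (simp add: cond_prob_def divide_right_mono)
qed

lemma cond_prob_disj: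
  assumes [measurable]: "Measurable.pred M P" "Measurable.pred M P'" "Measurable.pred M Q"
    and "\<And>\<omega>. \<not> (P \<omega> \<and> P' \<omega>)"
  shows "cond_prob M (\<lambda>\<omega>. P \<omega> \<or> P' \<omega>) Q = cond_prob M P Q + cond_prob M P' Q"
proof -
  have "{\<omega>\<in>space M. (P \<omega> \<or> P' \<omega>) \<and> Q \<omega>} = {\<omega>\<in>space M. P \<omega> \<and> Q \<omega>} \<union> {\<omega>\<in>space M. P' \<omega> \<and> Q \<omega>}"
    by auto
  moreover have "prob ({\<omega>\<in>space M. P \<omega> \<and> Q \<omega>} \<union> {\<omega>\<in>space M. P' \<omega> \<and> Q \<omega>})
      = prob {\<omega>\<in>space M. P \<omega> \<and> Q \<omega>} + prob {\<omega>\<in>space M. P' \<omega> \<and> Q \<omega>}"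
    using assms(4) by (intro finite_measure_Union) auto
  ultimately show ?thesis
    by (simp add: cond_prob_def add_divide_distrib)
qed

lemma prob_conj_eq_0_of_cond_prob_eq_0:
  assumes "Measurable.pred M Q" and "cond_prob M P Q = 0"
  shows "prob {\<omega>\<in>space M. P \<omega> \<and> Q \<omega>} = 0"
proof -
  have "prob {\<omega>\<in>space M. P \<omega> \<and> Q \<omega>} \<le> prob {\<omega>\<in>space M. Q \<omega>}"
    using assms(1) by (intro finite_measure_mono) auto
  moreover have "prob {\<omega>\<in>space M. P \<omega> \<and> Q \<omega>} = 0 \<or> prob {\<omega>\<in>space M. Q \<omega>} = 0"
    using assms(2) by (simp add: cond_prob_def)
  ultimately show ?thesis
    using measure_nonneg[of M "{\<omega>\<in>space M. P \<omega> \<and> Q \<omega>}"] by linarith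
qed

lemma prob_eq_0_if_disjoint_cond_support:
  assumes [measurable]: "X \<in> borel_measurable M" "Measurable.pred M Q"
    and "open V" and disjoint: "V \<inter> cond_support M X Q = {}"
  shows "prob {\<omega>\<in>space M. X \<omega> \<in> V \<and> Q \<omega>} = 0"
proof -
  note [measurable] = borel_open[OF \<open>open V\<close>]
  define F where "F = {ball x e | x e. 0 < e \<and> prob {\<omega>\<in>space M. X \<omega> \<in> ball x e \<and> Q \<omega>} = 0}"
  have cover: "V \<subseteq> \<Union>F"
  proof
    fix x assume "x \<in> V"
    then obtain e where "e > 0" and "\<not> cond_prob M (\<lambda>\<omega>. dist (X \<omega>) x < e) Q > 0"
      using disjoint unfolding cond_support_def by auto
    then have "cond_prob M (\<lambda>\<omega>. X \<omega> \<in> ball x e) Q = 0"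
      using cond_prob_nonneg[of "\<lambda>\<omega>. X \<omega> \<in> ball x e" Q] by (simp add: dist_commute)
    then have "prob {\<omega>\<in>space M. X \<omega> \<in> ball x e \<and> Q \<omega>} = 0"
      by (intro prob_conj_eq_0_of_cond_prob_eq_0) simp_all
    then show "x \<in> \<Union>F"
      using \<open>e > 0\<close> unfolding F_def by force
  qed
  obtain F' where F': "F' \<subseteq> F" "countable F'" "\<Union>F' = \<Union>F"
    using Lindelof[of F] unfolding F_def by auto
  have null: "(\<Union>b\<in>F'. {\<omega>\<in>space M. X \<omega> \<in> b \<and> Q \<omega>}) \<in> null_sets M"
  proof (rule null_sets_UN'[OF F'(2)])
    fix b assume "b \<in> F'"
    then obtain x e where "b = ball x e" "prob {\<omega>\<in>space M. X \<omega> \<in> ball x e \<and> Q \<omega>} = 0"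
      using F'(1) unfolding F_def by auto
    then show "{\<omega>\<in>space M. X \<omega> \<in> b \<and> Q \<omega>} \<in> null_sets M"
      by (auto simp: emeasure_eq_measure)
  qed
  have "{\<omega>\<in>space M. X \<omega> \<in> V \<and> Q \<omega>} \<in> null_sets M"
  proof (rule null_sets_subset[OF null])
    show "{\<omega>\<in>space M. X \<omega> \<in> V \<and> Q \<omega>} \<in> events"
      by measurable
    show "{\<omega>\<in>space M. X \<omega> \<in> V \<and> Q \<omega>} \<subseteq> (\<Union>b\<in>F'. {\<omega>\<in>space M. X \<omega> \<in> b \<and> Q \<omega>})"
      using cover F'(3) by auto
  qed
  then show ?thesis
    by (rule measure_eq_0_null_sets)
qed

lemma disjoint_cond_support_if_prob_eq_0:
  assumes [measurable]: "X \<in> borel_measurable M" "Measurable.pred M Q"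
    and "open V" and null: "prob {\<omega>\<in>space M. X \<omega> \<in> V \<and> Q \<omega>} = 0"
  shows "V \<inter> cond_support M X Q = {}"
proof -
  note [measurable] = borel_open[OF \<open>open V\<close>]
  have "x \<notin> cond_support M X Q" if "x \<in> V" for x
  proof -
    obtain e where "e > 0" "ball x e \<subseteq> V"
      using \<open>open V\<close> \<open>x \<in> V\<close> open_contains_ball by blast
    have "cond_prob M (\<lambda>\<omega>. dist (X \<omega>) x < e) Q \<le> cond_prob M (\<lambda>\<omega>. X \<omega> \<in> V) Q"
      using \<open>ball x e \<subseteq> V\<close> by (intro cond_prob_mono) (auto simp: dist_commute)
    also have "\<dots> = 0"
      using null by (simp add: cond_prob_def)
    finally show ?thesis
      using \<open>e > 0\<close> unfolding cond_support_def by (auto simp: not_less)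
  qed
  then show ?thesis by blast
qed

lemma prob_interval_eq_0_of_cond_support_eq:
  assumes [measurable]: "X \<in> borel_measurable M" "Measurable.pred M Q" "Measurable.pred M Q'"
    and "is_interval D"
    and atomless: "\<And>x. prob {\<omega>\<in>space M. X \<omega> = x} = 0"
    and support: "cond_support M X Q' = cond_support M X Q"
    and null: "prob {\<omega>\<in>space M. X \<omega> \<in> D \<and> Q \<omega>} = 0"
  shows "prob {\<omega>\<in>space M. X \<omega> \<in> D \<and> Q' \<omega>} = 0"
proof -
  have [measurable]: "D \<in> sets borel" "interior D \<in> sets borel"
    using real_interval_borel_measurable[OF \<open>is_interval D\<close>] by auto
  have "prob {\<omega>\<in>space M. X \<omega> \<in> interior D \<and> Q \<omega>} \<le> prob {\<omega>\<in>space M. X \<omega> \<in> D \<and> Q \<omega>}"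
    using interior_subset[of D] by (intro finite_measure_mono) auto
  then have "prob {\<omega>\<in>space M. X \<omega> \<in> interior D \<and> Q \<omega>} = 0"
    using null measure_nonneg[of M "{\<omega>\<in>space M. X \<omega> \<in> interior D \<and> Q \<omega>}"] by linarith
  then have "interior D \<inter> cond_support M X Q' = {}"
    using disjoint_cond_support_if_prob_eq_0[of X Q "interior D"] support by simp
  then have interior_null: "prob {\<omega>\<in>space M. X \<omega> \<in> interior D \<and> Q' \<omega>} = 0"
    by (intro prob_eq_0_if_disjoint_cond_support) simp_all
  have "prob {\<omega>\<in>space M. X \<omega> \<in> D \<and> Q' \<omega>}
      \<le> prob ({\<omega>\<in>space M. X \<omega> \<in> interior D \<and> Q' \<omega>} \<union> {\<omega>\<in>space M. X \<omega> = Inf D}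
              \<union> {\<omega>\<in>space M. X \<omega> = Sup D})"
    using is_interval_diff_interior_subset[OF \<open>is_interval D\<close>] by (intro finite_measure_mono) auto
  also have "\<dots> \<le> prob ({\<omega>\<in>space M. X \<omega> \<in> interior D \<and> Q' \<omega>} \<union> {\<omega>\<in>space M. X \<omega> = Inf D})
      + prob {\<omega>\<in>space M. X \<omega> = Sup D}"
    by (intro measure_Un_le) measurable
  also have "\<dots> \<le> prob {\<omega>\<in>space M. X \<omega> \<in> interior D \<and> Q' \<omega>} + prob {\<omega>\<in>space M. X \<omega> = Inf D}
      + prob {\<omega>\<in>space M. X \<omega> = Sup D}"
    by (intro add_right_mono measure_Un_le) measurable
  also have "\<dots> = 0"
    using interior_null atomless by simp
  finally show ?thesis
    using measure_nonneg[of M "{\<omega>\<in>space M. X \<omega> \<in> D \<and> Q' \<omega>}"] by linarith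
qed

lemma prob_conj_eq_of_cond_indep:
  assumes [measurable]: "Measurable.pred M E" "Measurable.pred M F" "Measurable.pred M H"
    and EF: "\<And>\<omega>. E \<omega> \<Longrightarrow> F \<omega>"
    and indep: "\<P>(\<omega> in M. E \<omega> \<and> H \<omega> \<bar> F \<omega>) = \<P>(\<omega> in M. E \<omega> \<bar> F \<omega>) * \<P>(\<omega> in M. H \<omega> \<bar> F \<omega>)"
  shows "prob {\<omega>\<in>space M. E \<omega> \<and> H \<omega>}
    = prob {\<omega>\<in>space M. E \<omega>} / prob {\<omega>\<in>space M. F \<omega>} * prob {\<omega>\<in>space M. F \<omega> \<and> H \<omega>}"
proof (cases "prob {\<omega>\<in>space M. F \<omega>} = 0")
  case True
  have "prob {\<omega>\<in>space M. E \<omega> \<and> H \<omega>} \<le> prob {\<omega>\<in>space M. F \<omega>}"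
    using EF by (intro finite_measure_mono) auto
  then show ?thesis
    using True measure_nonneg[of M "{\<omega>\<in>space M. E \<omega> \<and> H \<omega>}"] by simp
next
  case False
  have "{\<omega>\<in>space M. (E \<omega> \<and> H \<omega>) \<and> F \<omega>} = {\<omega>\<in>space M. E \<omega> \<and> H \<omega>}"
    "{\<omega>\<in>space M. E \<omega> \<and> F \<omega>} = {\<omega>\<in>space M. E \<omega>}"
    "{\<omega>\<in>space M. H \<omega> \<and> F \<omega>} = {\<omega>\<in>space M. F \<omega> \<and> H \<omega>}"
    using EF by auto
  then show ?thesis
    using indep False by (simp add: cond_prob_def field_simps)
qed

lemma cond_prob_selection_eq_of_absorbing:
  fixes U1 U2 :: "'a \<Rightarrow> real"
  assumes [measurable]: "Measurable.pred M G" "U1 \<in> borel_measurable M" "U2 \<in> borel_measurable M"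
    and "mono p" "mono q" and pq: "\<And>u. p u \<Longrightarrow> q u"
    and stationary: "\<And>g C. C \<in> sets borel \<Longrightarrow>
      \<P>(\<omega> in M. U1 \<omega> \<in> C \<bar> G \<omega> = g) = \<P>(\<omega> in M. U2 \<omega> \<in> C \<bar> G \<omega> = g)"
    and atomless: "\<And>x. prob {\<omega>\<in>space M. U1 \<omega> = x} = 0"
    and support: "\<And>g g'. cond_support M U1 (\<lambda>\<omega>. G \<omega> = g) = cond_support M U1 (\<lambda>\<omega>. G \<omega> = g')"
    and absorbing: "\<And>\<omega>. G \<omega> = g0 \<Longrightarrow> q (U2 \<omega>) \<Longrightarrow> p (U1 \<omega>)"
  shows "\<P>(\<omega> in M. q (U2 \<omega>) \<bar> G \<omega> = g) = \<P>(\<omega> in M. p (U1 \<omega>) \<bar> G \<omega> = g)"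
proof -
  define D where "D = {u. q u \<and> \<not> p u}"
  have "is_interval D"
    unfolding D_def using \<open>mono p\<close> \<open>mono q\<close> by (rule is_interval_Collect_mono_diff)
  have [measurable]: "Measurable.pred borel p" "Measurable.pred borel q" "D \<in> sets borel"
    using \<open>mono p\<close> \<open>mono q\<close> pred_borel_mono real_interval_borel_measurable[OF \<open>is_interval D\<close>]
    by auto
  have G_eq [measurable]: "Measurable.pred M (\<lambda>\<omega>. G \<omega> = g')" for g'
    by measurable
  have split: "\<P>(\<omega> in M. q (U2 \<omega>) \<bar> G \<omega> = g')
      = \<P>(\<omega> in M. p (U1 \<omega>) \<bar> G \<omega> = g') + \<P>(\<omega> in M. U1 \<omega> \<in> D \<bar> G \<omega> = g')" for g'
  proof -
    have "(\<lambda>\<omega>. q (U2 \<omega>)) = (\<lambda>\<omega>. p (U2 \<omega>) \<or> U2 \<omega> \<in> D)"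
      using pq by (auto simp: D_def)
    then have "\<P>(\<omega> in M. q (U2 \<omega>) \<bar> G \<omega> = g') = \<P>(\<omega> in M. p (U2 \<omega>) \<or> U2 \<omega> \<in> D \<bar> G \<omega> = g')"
      by (simp only:)
    also have "\<dots> = \<P>(\<omega> in M. p (U2 \<omega>) \<bar> G \<omega> = g') + \<P>(\<omega> in M. U2 \<omega> \<in> D \<bar> G \<omega> = g')"
      by (rule cond_prob_disj) (measurable, measurable, measurable, simp add: D_def)
    also have "\<dots> = \<P>(\<omega> in M. p (U1 \<omega>) \<bar> G \<omega> = g') + \<P>(\<omega> in M. U1 \<omega> \<in> D \<bar> G \<omega> = g')"
      using stationary[of "{u. p u}" g'] stationary[of D g'] by simp
    finally show ?thesis .
  qed
  have "\<P>(\<omega> in M. q (U2 \<omega>) \<bar> G \<omega> = g0) \<le> \<P>(\<omega> in M. p (U1 \<omega>) \<bar> G \<omega> = g0)"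
    by (rule cond_prob_mono) (measurable, use absorbing in auto)
  then have "\<P>(\<omega> in M. U1 \<omega> \<in> D \<bar> G \<omega> = g0) = 0"
    using split[of g0] cond_prob_nonneg[of "\<lambda>\<omega>. U1 \<omega> \<in> D" "\<lambda>\<omega>. G \<omega> = g0"] by linarith
  then have "prob {\<omega>\<in>space M. U1 \<omega> \<in> D \<and> G \<omega> = g0} = 0"
    by (rule prob_conj_eq_0_of_cond_prob_eq_0[OF G_eq])
  then have "prob {\<omega>\<in>space M. U1 \<omega> \<in> D \<and> G \<omega> = g} = 0"
    by (rule prob_interval_eq_0_of_cond_support_eq[OF assms(2) G_eq G_eq \<open>is_interval D\<close> atomless support])
  then show ?thesis
    using split[of g] by (simp add: cond_prob_def)
qed

lemma cond_prob_selection_proportional_of_cond_indep: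
  fixes U1 U2 :: "'a \<Rightarrow> real"
  assumes [measurable]: "Measurable.pred M G" "U1 \<in> borel_measurable M" "U2 \<in> borel_measurable M"
    and "mono p" "mono q" and qp: "\<And>u. q u \<Longrightarrow> p u"
    and stationary: "\<And>g C. C \<in> sets borel \<Longrightarrow>
      \<P>(\<omega> in M. U1 \<omega> \<in> C \<bar> G \<omega> = g) = \<P>(\<omega> in M. U2 \<omega> \<in> C \<bar> G \<omega> = g)"
    and indep: "\<And>g C. C \<in> sets borel \<Longrightarrow>
      \<P>(\<omega> in M. U1 \<omega> \<in> C \<and> G \<omega> = g \<bar> p (U1 \<omega>))
        = \<P>(\<omega> in M. U1 \<omega> \<in> C \<bar> p (U1 \<omega>)) * \<P>(\<omega> in M. G \<omega> = g \<bar> p (U1 \<omega>))"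
  shows "\<P>(\<omega> in M. q (U2 \<omega>) \<bar> G \<omega> = g)
    = prob {\<omega>\<in>space M. q (U1 \<omega>)} / prob {\<omega>\<in>space M. p (U1 \<omega>)} * \<P>(\<omega> in M. p (U1 \<omega>) \<bar> G \<omega> = g)"
proof -
  have [measurable]: "Measurable.pred borel p" "Measurable.pred borel q"
    by (rule pred_borel_mono[OF \<open>mono p\<close>] pred_borel_mono[OF \<open>mono q\<close>])+
  have "\<P>(\<omega> in M. q (U2 \<omega>) \<bar> G \<omega> = g) = \<P>(\<omega> in M. q (U1 \<omega>) \<bar> G \<omega> = g)"
    using stationary[of "{u. q u}" g] by simp
  also have "\<dots> = prob {\<omega>\<in>space M. q (U1 \<omega>)} / prob {\<omega>\<in>space M. p (U1 \<omega>)} * \<P>(\<omega> in M. p (U1 \<omega>) \<bar> G \<omega> = g)"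
    using prob_conj_eq_of_cond_indep[of "\<lambda>\<omega>. q (U1 \<omega>)" "\<lambda>\<omega>. p (U1 \<omega>)" "\<lambda>\<omega>. G \<omega> = g"]
      indep[of "{u. q u}" g] qp
    by (simp add: cond_prob_def)
  finally show ?thesis .
qed

lemma cond_prob_selection_proportional:
  fixes U1 U2 :: "'a \<Rightarrow> real"
  assumes [measurable]: "Measurable.pred M G" "U1 \<in> borel_measurable M" "U2 \<in> borel_measurable M"
    and "mono p" "mono q"
    and stationary: "\<And>g C. C \<in> sets borel \<Longrightarrow>
      \<P>(\<omega> in M. U1 \<omega> \<in> C \<bar> G \<omega> = g) = \<P>(\<omega> in M. U2 \<omega> \<in> C \<bar> G \<omega> = g)"
    and indep: "\<And>g C. C \<in> sets borel \<Longrightarrow>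
      \<P>(\<omega> in M. U1 \<omega> \<in> C \<and> G \<omega> = g \<bar> p (U1 \<omega>))
        = \<P>(\<omega> in M. U1 \<omega> \<in> C \<bar> p (U1 \<omega>)) * \<P>(\<omega> in M. G \<omega> = g \<bar> p (U1 \<omega>))"
    and atomless: "\<And>x. prob {\<omega>\<in>space M. U1 \<omega> = x} = 0"
    and support: "\<And>g g'. cond_support M U1 (\<lambda>\<omega>. G \<omega> = g) = cond_support M U1 (\<lambda>\<omega>. G \<omega> = g')"
    and absorbing: "\<And>\<omega>. G \<omega> = g0 \<Longrightarrow> q (U2 \<omega>) \<Longrightarrow> p (U1 \<omega>)"
  shows "\<exists>r. \<forall>g. \<P>(\<omega> in M. q (U2 \<omega>) \<bar> G \<omega> = g) = r * \<P>(\<omega> in M. p (U1 \<omega>) \<bar> G \<omega> = g)"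
  using mono_pred_linear[OF \<open>mono p\<close> \<open>mono q\<close>]
proof
  assume "\<forall>u. p u \<longrightarrow> q u"
  then show ?thesis
    using cond_prob_selection_eq_of_absorbing[OF assms(1-5) _ stationary atomless support absorbing]
    by (intro exI[of _ 1]) simp
next
  assume "\<forall>u. q u \<longrightarrow> p u"
  then show ?thesis
    using cond_prob_selection_proportional_of_cond_indep[OF assms(1-5) _ stationary indep] by blast
qed

lemma selection_probabilities_of_proportional:
  assumes [measurable]: "Measurable.pred M G" "Measurable.pred M S1" "Measurable.pred M S20"
      "Measurable.pred M S21"
    and S2_eq: "\<And>\<omega>. S2 \<omega> = (if G \<omega> then S21 \<omega> else S20 \<omega>)"
    and absorbing: "\<And>\<omega>. \<not> S1 \<omega> \<Longrightarrow> \<not> S2 \<omega>"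
    and monotone: "\<And>\<omega>. S20 \<omega> \<Longrightarrow> S21 \<omega>"
    and treated_pos: "\<P>(\<omega> in M. S2 \<omega> \<bar> G \<omega>) > 0"
    and untreated_pos: "\<P>(\<omega> in M. S2 \<omega> \<bar> \<not> G \<omega>) > 0"
    and treated_prop: "\<P>(\<omega> in M. S20 \<omega> \<bar> G \<omega>) = r * \<P>(\<omega> in M. S1 \<omega> \<bar> G \<omega>)"
    and untreated_prop: "\<P>(\<omega> in M. S20 \<omega> \<bar> \<not> G \<omega>) = r * \<P>(\<omega> in M. S1 \<omega> \<bar> \<not> G \<omega>)"
  shows "\<P>(\<omega> in M. S21 \<omega> \<bar> \<not> G \<omega> \<and> S20 \<omega>) = 1 \<and>
    \<P>(\<omega> in M. S20 \<omega> \<bar> G \<omega> \<and> S21 \<omega>)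
      = \<P>(\<omega> in M. S20 \<omega> \<bar> G \<omega>) / \<P>(\<omega> in M. S2 \<omega> \<bar> G \<omega>) \<and>
    \<P>(\<omega> in M. S20 \<omega> \<bar> G \<omega> \<and> S21 \<omega>)
      = (\<P>(\<omega> in M. S1 \<omega> \<bar> G \<omega>) / \<P>(\<omega> in M. S2 \<omega> \<bar> G \<omega>)) *
        (\<P>(\<omega> in M. S2 \<omega> \<bar> \<not> G \<omega>) / \<P>(\<omega> in M. S1 \<omega> \<bar> \<not> G \<omega>)) \<and>
    \<P>(\<omega> in M. S20 \<omega> \<bar> G \<omega> \<and> S21 \<omega>) \<in> {0..1}"
proof -
  have [measurable]: "Measurable.pred M S2"
    unfolding S2_eq[abs_def] by measurable
  have treated: "\<P>(\<omega> in M. S21 \<omega> \<bar> G \<omega>) = \<P>(\<omega> in M. S2 \<omega> \<bar> G \<omega>)"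
    and untreated: "\<P>(\<omega> in M. S20 \<omega> \<bar> \<not> G \<omega>) = \<P>(\<omega> in M. S2 \<omega> \<bar> \<not> G \<omega>)"
    by (simp_all add: cond_prob_def S2_eq cong: rev_conj_cong)
  have G_nonnull: "prob {\<omega>\<in>space M. G \<omega>} \<noteq> 0"
    and untreated_nonnull: "prob {\<omega>\<in>space M. \<not> G \<omega> \<and> S20 \<omega>} \<noteq> 0"
    using treated_pos untreated_pos untreated by (auto simp: cond_prob_def conj_commute)
  have "\<P>(\<omega> in M. S2 \<omega> \<bar> \<not> G \<omega>) \<le> \<P>(\<omega> in M. S1 \<omega> \<bar> \<not> G \<omega>)"
    by (rule cond_prob_mono) (measurable, use absorbing in auto)
  then have r_eq: "r = \<P>(\<omega> in M. S2 \<omega> \<bar> \<not> G \<omega>) / \<P>(\<omega> in M. S1 \<omega> \<bar> \<not> G \<omega>)"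
    using untreated_prop untreated untreated_pos by simp
  have "(\<lambda>\<omega>. S20 \<omega> \<and> S21 \<omega>) = S20"
    using monotone by auto
  then have pi1: "\<P>(\<omega> in M. S20 \<omega> \<bar> G \<omega> \<and> S21 \<omega>)
      = \<P>(\<omega> in M. S20 \<omega> \<bar> G \<omega>) / \<P>(\<omega> in M. S2 \<omega> \<bar> G \<omega>)"
    using cond_prob_conj_cond[OF G_nonnull, of S20 S21] treated by simp
  show ?thesis
  proof (intro conjI pi1)
    show "\<P>(\<omega> in M. S21 \<omega> \<bar> \<not> G \<omega> \<and> S20 \<omega>) = 1"
      using untreated_nonnull monotone by (intro cond_prob_eq_1) auto
    show "\<P>(\<omega> in M. S20 \<omega> \<bar> G \<omega> \<and> S21 \<omega>)
      = (\<P>(\<omega> in M. S1 \<omega> \<bar> G \<omega>) / \<P>(\<omega> in M. S2 \<omega> \<bar> G \<omega>)) *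
        (\<P>(\<omega> in M. S2 \<omega> \<bar> \<not> G \<omega>) / \<P>(\<omega> in M. S1 \<omega> \<bar> \<not> G \<omega>))"
      using pi1 treated_prop r_eq by (simp add: ac_simps)
    show "\<P>(\<omega> in M. S20 \<omega> \<bar> G \<omega> \<and> S21 \<omega>) \<in> {0..1}"
      using cond_prob_nonneg cond_prob_le_1 by simp
  qed
qed

text \<open>Here the treated group is \<open>G \<omega> = t\<close>, with potential selection indicators \<open>S21\<close> (treated)
  and \<open>S20\<close> (untreated); negative monotonicity is the instance \<open>t = False\<close> with the two
  indicators exchanged.\<close>

lemma selection_probabilities_under_monotonicity:
  fixes U1 U2 :: "'a \<Rightarrow> real" and t :: bool
  assumes G_meas: "Measurable.pred M G" and U1_meas: "U1 \<in> borel_measurable M"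
    and U2_meas: "U2 \<in> borel_measurable M" and S21_meas: "Measurable.pred M S21"
    and "mono p" "mono q"
    and S1_eq: "S1 = (\<lambda>\<omega>. p (U1 \<omega>))" and S20_eq: "S20 = (\<lambda>\<omega>. q (U2 \<omega>))"
    and S2_eq: "\<And>\<omega>. S2 \<omega> = (if G \<omega> = t then S21 \<omega> else S20 \<omega>)"
    and stationary: "\<And>g C. C \<in> sets borel \<Longrightarrow>
      \<P>(\<omega> in M. U1 \<omega> \<in> C \<bar> G \<omega> = g) = \<P>(\<omega> in M. U2 \<omega> \<in> C \<bar> G \<omega> = g)"
    and indep: "\<And>g C. C \<in> sets borel \<Longrightarrow>
      \<P>(\<omega> in M. U1 \<omega> \<in> C \<and> G \<omega> = g \<bar> S1 \<omega>)
        = \<P>(\<omega> in M. U1 \<omega> \<in> C \<bar> S1 \<omega>) * \<P>(\<omega> in M. G \<omega> = g \<bar> S1 \<omega>)"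
    and atomless: "\<And>x. prob {\<omega>\<in>space M. U1 \<omega> = x} = 0"
    and support: "\<And>g g'. cond_support M U1 (\<lambda>\<omega>. G \<omega> = g) = cond_support M U1 (\<lambda>\<omega>. G \<omega> = g')"
    and absorbing: "\<And>\<omega>. \<not> S1 \<omega> \<Longrightarrow> \<not> S2 \<omega>"
    and positive: "\<And>g. \<P>(\<omega> in M. S2 \<omega> \<bar> G \<omega> = g) > 0"
    and monotone: "\<forall>\<omega>. S21 \<omega> \<ge> S20 \<omega>"
  shows "\<P>(\<omega> in M. S21 \<omega> \<bar> G \<omega> \<noteq> t \<and> S20 \<omega>) = 1 \<and>
    \<P>(\<omega> in M. S20 \<omega> \<bar> G \<omega> = t \<and> S21 \<omega>)
      = \<P>(\<omega> in M. S20 \<omega> \<bar> G \<omega> = t) / \<P>(\<omega> in M. S2 \<omega> \<bar> G \<omega> = t) \<and>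
    \<P>(\<omega> in M. S20 \<omega> \<bar> G \<omega> = t \<and> S21 \<omega>)
      = (\<P>(\<omega> in M. S1 \<omega> \<bar> G \<omega> = t) / \<P>(\<omega> in M. S2 \<omega> \<bar> G \<omega> = t)) *
        (\<P>(\<omega> in M. S2 \<omega> \<bar> G \<omega> \<noteq> t) / \<P>(\<omega> in M. S1 \<omega> \<bar> G \<omega> \<noteq> t)) \<and>
    \<P>(\<omega> in M. S20 \<omega> \<bar> G \<omega> = t \<and> S21 \<omega>) \<in> {0..1}"
proof -
  note [measurable] = G_meas U1_meas U2_meas pred_borel_mono[OF \<open>mono p\<close>] pred_borel_mono[OF \<open>mono q\<close>]
  have S1_meas: "Measurable.pred M S1" and S20_meas: "Measurable.pred M S20"
    and treated_meas: "Measurable.pred M (\<lambda>\<omega>. G \<omega> = t)"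
    unfolding S1_eq S20_eq by measurable
  have untreated: "(\<lambda>\<omega>. G \<omega> = (\<not> t)) = (\<lambda>\<omega>. G \<omega> \<noteq> t)"
    by auto
  have "\<And>\<omega>. G \<omega> = (\<not> t) \<Longrightarrow> q (U2 \<omega>) \<Longrightarrow> p (U1 \<omega>)"
    using absorbing S2_eq unfolding S1_eq S20_eq by force
  then obtain r where r: "\<And>g. \<P>(\<omega> in M. S20 \<omega> \<bar> G \<omega> = g) = r * \<P>(\<omega> in M. S1 \<omega> \<bar> G \<omega> = g)"
    using cond_prob_selection_proportional[OF G_meas U1_meas U2_meas \<open>mono p\<close> \<open>mono q\<close>
        stationary indep[unfolded S1_eq] atomless support]
    unfolding S1_eq S20_eq by blast
  have "\<And>\<omega>. S20 \<omega> \<Longrightarrow> S21 \<omega>"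
    using monotone by auto
  then show ?thesis
    using selection_probabilities_of_proportional[OF treated_meas S1_meas S20_meas S21_meas S2_eq absorbing
        _ positive[of t] positive[of "\<not> t", unfolded untreated] r[of t] r[of "\<not> t", unfolded untreated]]
    by blast
qed

end

theorem proposition3:
  fixes M :: "'a measure"
    and G S1 S21 S20 S2 :: "'a \<Rightarrow> bool"
    and U1 U2 :: "'a \<Rightarrow> real"
    and h0 h1 :: "real \<Rightarrow> nat \<Rightarrow> bool"
  assumes P: "prob_space M"
    (* measurability *)
    and mG: "G \<in> measurable M (count_space UNIV)"
    and mS1: "S1 \<in> measurable M (count_space UNIV)"
    and mS21: "S21 \<in> measurable M (count_space UNIV)"
    and mS20: "S20 \<in> measurable M (count_space UNIV)"
    and mU1: "U1 \<in> borel_measurable M"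
    and mU2: "U2 \<in> borel_measurable M"
    (* observed period-2 selection indicator *)
    and S2_def: "\<forall>\<omega>. S2 \<omega> = (if G \<omega> then S21 \<omega> else S20 \<omega>)"
    (* selection model, with no anticipation in period 1 *)
    and sel1: "\<forall>\<omega>. S1 \<omega> = h0 (U1 \<omega>) 1 \<and> S1 \<omega> = h1 (U1 \<omega>) 1"
    and sel2: "\<forall>\<omega>. S20 \<omega> = h0 (U2 \<omega>) 2 \<and> S21 \<omega> = h1 (U2 \<omega>) 2"
    and h_mono: "\<forall>t\<in>{1,2}. mono (\<lambda>u. h0 u t) \<and> mono (\<lambda>u. h1 u t)"
    and U_cont: "\<forall>x. \<P>(\<omega> in M. U1 \<omega> = x) = 0 \<and> \<P>(\<omega> in M. U2 \<omega> = x) = 0"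
    and U_supp: "\<exists>K. compact K \<and>
        (\<forall>g. cond_support M U1 (\<lambda>\<omega>. G \<omega> = g) = K \<and> cond_support M U2 (\<lambda>\<omega>. G \<omega> = g) = K)"
    and U_stat: "\<forall>g. \<forall>A\<in>sets borel.
        \<P>(\<omega> in M. U1 \<omega> \<in> A \<bar> G \<omega> = g) = \<P>(\<omega> in M. U2 \<omega> \<in> A \<bar> G \<omega> = g)"
    and U1_ci: "\<forall>s g. \<forall>A\<in>sets borel.
        \<P>(\<omega> in M. U1 \<omega> \<in> A \<and> G \<omega> = g \<bar> S1 \<omega> = s)
          = \<P>(\<omega> in M. U1 \<omega> \<in> A \<bar> S1 \<omega> = s) * \<P>(\<omega> in M. G \<omega> = g \<bar> S1 \<omega> = s)"
    and U2_ci: "\<forall>s g. \<forall>A\<in>sets borel.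
        \<P>(\<omega> in M. U2 \<omega> \<in> A \<and> G \<omega> = g \<bar> S2 \<omega> = s)
          = \<P>(\<omega> in M. U2 \<omega> \<in> A \<bar> S2 \<omega> = s) * \<P>(\<omega> in M. G \<omega> = g \<bar> S2 \<omega> = s)"
    (* missingness is absorbing *)
    and absorbing: "\<forall>\<omega>. \<not> S1 \<omega> \<longrightarrow> \<not> S2 \<omega>"
    (* monotonicity *)
    and monotonicity: "(\<forall>\<omega>. S21 \<omega> \<ge> S20 \<omega>) \<or> (\<forall>\<omega>. S21 \<omega> \<le> S20 \<omega>)"
    (* positivity: E[S_t | G = g] > 0 *)
    and pos: "\<forall>g. \<P>(\<omega> in M. S1 \<omega> \<bar> G \<omega> = g) > 0 \<and> \<P>(\<omega> in M. S2 \<omega> \<bar> G \<omega> = g) > 0"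
  shows "((\<forall>\<omega>. S21 \<omega> \<ge> S20 \<omega>) \<longrightarrow>
            \<P>(\<omega> in M. S21 \<omega> \<bar> \<not> G \<omega> \<and> S20 \<omega>) = 1 \<and>
            \<P>(\<omega> in M. S20 \<omega> \<bar> G \<omega> \<and> S21 \<omega>)
              = \<P>(\<omega> in M. S20 \<omega> \<bar> G \<omega>) / \<P>(\<omega> in M. S2 \<omega> \<bar> G \<omega>) \<and>
            \<P>(\<omega> in M. S20 \<omega> \<bar> G \<omega> \<and> S21 \<omega>)
              = (\<P>(\<omega> in M. S1 \<omega> \<bar> G \<omega>) / \<P>(\<omega> in M. S2 \<omega> \<bar> G \<omega>)) *
                (\<P>(\<omega> in M. S2 \<omega> \<bar> \<not> G \<omega>) / \<P>(\<omega> in M. S1 \<omega> \<bar> \<not> G \<omega>)) \<and>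
            \<P>(\<omega> in M. S20 \<omega> \<bar> G \<omega> \<and> S21 \<omega>) \<in> {0..1})
       \<and> ((\<forall>\<omega>. S21 \<omega> \<le> S20 \<omega>) \<longrightarrow>
            \<P>(\<omega> in M. S20 \<omega> \<bar> G \<omega> \<and> S21 \<omega>) = 1 \<and>
            \<P>(\<omega> in M. S21 \<omega> \<bar> \<not> G \<omega> \<and> S20 \<omega>)
              = \<P>(\<omega> in M. S21 \<omega> \<bar> \<not> G \<omega>) / \<P>(\<omega> in M. S2 \<omega> \<bar> \<not> G \<omega>) \<and>
            \<P>(\<omega> in M. S21 \<omega> \<bar> \<not> G \<omega> \<and> S20 \<omega>)
              = (\<P>(\<omega> in M. S1 \<omega> \<bar> \<not> G \<omega>) / \<P>(\<omega> in M. S2 \<omega> \<bar> \<not> G \<omega>)) *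
                (\<P>(\<omega> in M. S2 \<omega> \<bar> G \<omega>) / \<P>(\<omega> in M. S1 \<omega> \<bar> G \<omega>)) \<and>
            \<P>(\<omega> in M. S21 \<omega> \<bar> \<not> G \<omega> \<and> S20 \<omega>) \<in> {0..1})"
proof -
  interpret prob_space M by (rule P)
  have S2_eq: "\<And>\<omega>. S2 \<omega> = (if G \<omega> = True then S21 \<omega> else S20 \<omega>)"
    "\<And>\<omega>. S2 \<omega> = (if G \<omega> = False then S20 \<omega> else S21 \<omega>)"
    using S2_def by simp_all
  have stationary: "\<And>g C. C \<in> sets borel \<Longrightarrow>
      \<P>(\<omega> in M. U1 \<omega> \<in> C \<bar> G \<omega> = g) = \<P>(\<omega> in M. U2 \<omega> \<in> C \<bar> G \<omega> = g)"
    using U_stat by blast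
  have indep: "\<And>g C. C \<in> sets borel \<Longrightarrow> \<P>(\<omega> in M. U1 \<omega> \<in> C \<and> G \<omega> = g \<bar> S1 \<omega>)
        = \<P>(\<omega> in M. U1 \<omega> \<in> C \<bar> S1 \<omega>) * \<P>(\<omega> in M. G \<omega> = g \<bar> S1 \<omega>)"
    using U1_ci[THEN spec[of _ True]] by simp
  have atomless: "\<And>x. prob {\<omega>\<in>space M. U1 \<omega> = x} = 0"
    using U_cont by simp
  obtain K where "\<And>g. cond_support M U1 (\<lambda>\<omega>. G \<omega> = g) = K"
    using U_supp by blast
  then have support: "\<And>g g'. cond_support M U1 (\<lambda>\<omega>. G \<omega> = g) = cond_support M U1 (\<lambda>\<omega>. G \<omega> = g')"
    by simp
  have positive: "\<And>g. \<P>(\<omega> in M. S2 \<omega> \<bar> G \<omega> = g) > 0"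
    using pos by simp
  have absorb: "\<And>\<omega>. \<not> S1 \<omega> \<Longrightarrow> \<not> S2 \<omega>"
    using absorbing by blast
  have mono_h: "mono (\<lambda>u. h0 u 1)" "mono (\<lambda>u. h0 u 2)" "mono (\<lambda>u. h1 u 1)" "mono (\<lambda>u. h1 u 2)"
    using h_mono by auto
  have sel: "S1 = (\<lambda>\<omega>. h0 (U1 \<omega>) 1)" "S20 = (\<lambda>\<omega>. h0 (U2 \<omega>) 2)"
    "S1 = (\<lambda>\<omega>. h1 (U1 \<omega>) 1)" "S21 = (\<lambda>\<omega>. h1 (U2 \<omega>) 2)"
    using sel1 sel2 by auto
  note identified = selection_probabilities_under_monotonicity[OF mG mU1 mU2]
  show ?thesis
    using identified[OF mS21 mono_h(1,2) sel(1,2) S2_eq(1) stationary indep atomless support absorb positive]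
      identified[OF mS20 mono_h(3,4) sel(3,4) S2_eq(2) stationary indep atomless support absorb positive]
    unfolding eq_True eq_False not_not by blast
qed

end
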